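(* Let $M$ be a combinatorial $3$-pseudomanifold with vertex set $V=V_1\dot\cup V_2$, let $S_{(V_1,V_2)}$ be the associated slicing, let $Q$ be a quadrilateral of $S_{(V_1,V_2)}$, and let $x\in V_1$, $a\in V_2$. Then $Q$ shares at most one edge with the trace $C^x$ and at most one edge with the trace $C_a$.
   Context: A combinatorial $3$-pseudomanifold is a finite pure $3$-dimensional simplicial complex in which the link of every vertex is a combinatorial surface. A function $f:M\to\mathbb{R}$ is regular simplexwise linear (rsl) if it is linear on every simplex and takes pairwise distinct values on the vertices. Given a partition $V=V_1\dot\cup V_2$ of the vertex set into nonempty sets, choose an rsl-function $f$ with $f(v)<f(w)$ for all $v\in V_1$, $w\in V_2$ and $x_0$ strictly between $\max f(V_1)$ and $\min f(V_2)$; the slicing $S_{(V_1,V_2)}$ is the polyhedral complex $f^{-1}(x_0)$ (made of triangles and quadrilaterals). Each vertex of $S_{(V_1,V_2)}$ is the intersection point of $f^{-1}(x_0)$ with an edge $\langle u,w\rangle$ of $M$ with $u\in V_1$, $w\in V_2$, and is denoted $\binom{u}{w}$. For $x\in V_1$ define $C^x_2$ as the set of faces of $S_{(V_1,V_2)}$ of the form $\langle\binom{x}{a},\binom{x}{b},\binom{x}{c}\rangle$ with $a,b,c\in V_2$, and $C^x_1$ as the set of faces of $S_{(V_1,V_2)}$ not in $C^x_2$ of the form $\langle\binom{x}{a},\binom{x}{b}\rangle$ with $a,b\in V_2$; the trace of $x$ is $C^x:=\overline{C^x_2\cup C^x_1}$ (the subcomplex generated). Analogously, for $a\in V_2$,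 the trace $C_a$ is the closure of the set of triangles $\langle\binom{x}{a},\binom{y}{a},\binom{z}{a}\rangle$ and edges $\langle\binom{x}{a},\binom{y}{a}\rangle$ ($x,y,z\in V_1$) of $S_{(V_1,V_2)}$. *)

theory Defs
  imports Main
begin

definition simplicial_complex :: "'a set set \<Rightarrow> bool" where
  "simplicial_complex K \<longleftrightarrow> finite K \<and> (\<forall>\<sigma>\<in>K. finite \<sigma> \<and> \<sigma> \<noteq> {}) \<and>
     (\<forall>\<sigma>\<in>K. \<forall>\<tau>. \<tau> \<subseteq> \<sigma> \<and> \<tau> \<noteq> {} \<longrightarrow> \<tau> \<in> K)"

definition verts :: "'a set set \<Rightarrow> 'a set" where
  "verts K = \<Union>K"

definition pure_dim :: "'a set set \<Rightarrow> nat \<Rightarrow> bool" where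
  "pure_dim K d \<longleftrightarrow> (\<forall>\<sigma>\<in>K. card \<sigma> \<le> d + 1) \<and> (\<forall>\<sigma>\<in>K. \<exists>\<tau>\<in>K. \<sigma> \<subseteq> \<tau> \<and> card \<tau> = d + 1)"

definition link :: "'a set set \<Rightarrow> 'a \<Rightarrow> 'a set set" where
  "link K v = {\<tau> \<in> K. v \<notin> \<tau> \<and> insert v \<tau> \<in> K}"

definition adj :: "'a set set \<Rightarrow> ('a \<times> 'a) set" where
  "adj K = {(u, w). {u, w} \<in> K \<and> u \<noteq> w}"

definition connected_cx :: "'a set set \<Rightarrow> bool" where
  "connected_cx K \<longleftrightarrow> (\<forall>u\<in>verts K. \<forall>w\<in>verts K. (u, w) \<in> (adj K)\<^sup>*)"

definition comb_circle :: "'a set set \<Rightarrow> bool" where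
  "comb_circle L \<longleftrightarrow> simplicial_complex L \<and> pure_dim L 1 \<and> L \<noteq> {} \<and>
     (\<forall>v\<in>verts L. card {e \<in> L. card e = 2 \<and> v \<in> e} = 2) \<and> connected_cx L"

definition comb_surface :: "'a set set \<Rightarrow> bool" where
  "comb_surface L \<longleftrightarrow> simplicial_complex L \<and> pure_dim L 2 \<and> L \<noteq> {} \<and>
     (\<forall>e\<in>L. card e = 2 \<longrightarrow> card {t \<in> L. card t = 3 \<and> e \<subseteq> t} = 2) \<and>
     (\<forall>v\<in>verts L. comb_circle (link L v)) \<and> connected_cx L"

definition comb_3_pseudomanifold :: "'a set set \<Rightarrow> bool" where
  "comb_3_pseudomanifold M \<longleftrightarrow> simplicial_complex M \<and> pure_dim M 3 \<and> M \<noteq> {} \<and>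
     (\<forall>v\<in>verts M. comb_surface (link M v))"

text \<open>Slicing S_(V1,V2): the vertex binom(u,w) is the pair (u,w) (u in V1, w in V2).
  The face of S cut out of a simplex sigma meeting both V1 and V2 has vertex set
  (sigma \<inter> V1) \<times> (sigma \<inter> V2); faces are identified with their vertex sets.\<close>
definition slicing :: "'a set set \<Rightarrow> 'a set \<Rightarrow> 'a set \<Rightarrow> ('a \<times> 'a) set set" where
  "slicing M V1 V2 = {(\<sigma> \<inter> V1) \<times> (\<sigma> \<inter> V2) | \<sigma>. \<sigma> \<in> M \<and> \<sigma> \<inter> V1 \<noteq> {} \<and> \<sigma> \<inter> V2 \<noteq> {}}"

definition quadrilateral :: "'a set set \<Rightarrow> 'a set \<Rightarrow> 'a set \<Rightarrow> ('a \<times> 'a) set \<Rightarrow> bool" where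
  "quadrilateral M V1 V2 Q \<longleftrightarrow> Q \<in> slicing M V1 V2 \<and> card Q = 4"

definition face_edges :: "'a set set \<Rightarrow> 'a set \<Rightarrow> 'a set \<Rightarrow> ('a \<times> 'a) set \<Rightarrow> ('a \<times> 'a) set set" where
  "face_edges M V1 V2 F = {e \<in> slicing M V1 V2. card e = 2 \<and> e \<subseteq> F}"

definition gen_closure :: "('a \<times> 'a) set set \<Rightarrow> ('a \<times> 'a) set set \<Rightarrow> ('a \<times> 'a) set set" where
  "gen_closure S C = {c \<in> S. \<exists>d\<in>C. c \<subseteq> d}"

definition trace2_up :: "'a set set \<Rightarrow> 'a set \<Rightarrow> 'a set \<Rightarrow> 'a \<Rightarrow> ('a \<times> 'a) set set" where
  "trace2_up M V1 V2 x = {t \<in> slicing M V1 V2. \<exists>a b c. a \<in> V2 \<and> b \<in> V2 \<and> c \<in> V2 \<and>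
      a \<noteq> b \<and> a \<noteq> c \<and> b \<noteq> c \<and> t = {(x, a), (x, b), (x, c)}}"

definition trace1_up :: "'a set set \<Rightarrow> 'a set \<Rightarrow> 'a set \<Rightarrow> 'a \<Rightarrow> ('a \<times> 'a) set set" where
  "trace1_up M V1 V2 x = {e \<in> slicing M V1 V2. e \<notin> trace2_up M V1 V2 x \<and>
      (\<exists>a b. a \<in> V2 \<and> b \<in> V2 \<and> a \<noteq> b \<and> e = {(x, a), (x, b)})}"

definition trace_up :: "'a set set \<Rightarrow> 'a set \<Rightarrow> 'a set \<Rightarrow> 'a \<Rightarrow> ('a \<times> 'a) set set" where
  "trace_up M V1 V2 x = gen_closure (slicing M V1 V2) (trace2_up M V1 V2 x \<union> trace1_up M V1 V2 x)"

definition trace_low :: "'a set set \<Rightarrow> 'a set \<Rightarrow> 'a set \<Rightarrow> 'a \<Rightarrow> ('a \<times> 'a) set set" where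
  "trace_low M V1 V2 a = gen_closure (slicing M V1 V2)
     ({t \<in> slicing M V1 V2. \<exists>x y z. x \<in> V1 \<and> y \<in> V1 \<and> z \<in> V1 \<and>
         x \<noteq> y \<and> x \<noteq> z \<and> y \<noteq> z \<and> t = {(x, a), (y, a), (z, a)}} \<union>
      {e \<in> slicing M V1 V2. \<exists>x y. x \<in> V1 \<and> y \<in> V1 \<and> x \<noteq> y \<and> e = {(x, a), (y, a)}})"

end

theory Submission
  imports Defs
begin

text \<open>A quadrilateral is cut out of a tetrahedron with two vertices on each side of the
  partition, so it is the product of two 2-element sets. An edge of the trace of x
  (resp. a) has all its vertices with first (resp. second) component x (resp. a);
  inside the quadrilateral such edges lie in a 2-element set, so there is at most one.\<close>

lemma card_two_subsets_eq:
  assumes "finite S" "card S \<le> 2" "e \<subseteq> S" "e' \<subseteq> S" "card e = 2" "card e' = 2"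
  shows "e = e'"
proof -
  have "e = S" "e' = S"
    using assms card_mono[OF \<open>finite S\<close>] card_seteq[OF \<open>finite S\<close>] by (metis)+
  then show ?thesis by simp
qed

lemma nat_mult_eq_4_add_le_4:
  fixes p q :: nat
  assumes "p * q = 4" "p + q \<le> 4"
  shows "p = 2 \<and> q = 2"
proof -
  have "p \<in> {0,1,2,3,4}" "q \<in> {0,1,2,3,4}" using assms(2) by auto
  then show ?thesis using assms by auto
qed

lemma quadrilateral_eq_times:
  assumes "simplicial_complex M" "pure_dim M 3" "V1 \<inter> V2 = {}"
    and "quadrilateral M V1 V2 Q"
  obtains A B where "Q = A \<times> B" "finite A" "finite B" "card A = 2" "card B = 2"
proof -
  obtain \<sigma> where \<sigma>: "\<sigma> \<in> M" and Q\<sigma>: "Q = (\<sigma> \<inter> V1) \<times> (\<sigma> \<inter> V2)" and "card Q = 4"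
    using assms(4) unfolding quadrilateral_def slicing_def by blast
  have "finite \<sigma>" using assms(1) \<sigma> unfolding simplicial_complex_def by blast
  have "card \<sigma> \<le> 4" using assms(2) \<sigma> unfolding pure_dim_def by auto
  define A B where "A = \<sigma> \<inter> V1" and "B = \<sigma> \<inter> V2"
  have Q: "Q = A \<times> B" using Q\<sigma> by (simp add: A_def B_def)
  have fin: "finite A" "finite B" using \<open>finite \<sigma>\<close> by (auto simp: A_def B_def)
  have "card A + card B = card (A \<union> B)"
    using fin assms(3) by (intro card_Un_disjoint[symmetric]) (auto simp: A_def B_def)
  also have "\<dots> \<le> card \<sigma>" using \<open>finite \<sigma>\<close> by (intro card_mono) (auto simp: A_def B_def)
  finally have "card A + card B \<le> 4" using \<open>card \<sigma> \<le> 4\<close> by linarith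
  moreover have "card A * card B = 4"
    using \<open>card Q = 4\<close> Q by (simp add: card_cartesian_product)
  ultimately have "card A = 2" "card B = 2" using nat_mult_eq_4_add_le_4 by blast+
  with Q fin show thesis by (rule that)
qed

lemma trace_up_fst:
  assumes "F \<in> trace_up M V1 V2 x" "p \<in> F"
  shows "fst p = x"
  using assms unfolding trace_up_def gen_closure_def trace2_up_def trace1_up_def by auto

lemma trace_low_snd:
  assumes "F \<in> trace_low M V1 V2 a" "p \<in> F"
  shows "snd p = a"
  using assms unfolding trace_low_def gen_closure_def by auto

lemma face_edges_subset_eq:
  assumes "e \<in> face_edges M V1 V2 Q" "e' \<in> face_edges M V1 V2 Q"
    and "e \<subseteq> P" "e' \<subseteq> P" "finite P" "card P \<le> 2"
  shows "e = e'"
  using assms card_two_subsets_eq unfolding face_edges_def by blast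

theorem lemma3p6:
  fixes M :: "'a set set" and V1 V2 :: "'a set" and Q :: "('a \<times> 'a) set" and x a :: 'a
  assumes "comb_3_pseudomanifold M"
    and "V1 \<union> V2 = verts M" and "V1 \<inter> V2 = {}" and "V1 \<noteq> {}" and "V2 \<noteq> {}"
    and "quadrilateral M V1 V2 Q"
    and "x \<in> V1" and "a \<in> V2"
  shows "(\<forall>e\<in>face_edges M V1 V2 Q \<inter> trace_up M V1 V2 x.
            \<forall>e'\<in>face_edges M V1 V2 Q \<inter> trace_up M V1 V2 x. e = e') \<and>
         (\<forall>e\<in>face_edges M V1 V2 Q \<inter> trace_low M V1 V2 a.
            \<forall>e'\<in>face_edges M V1 V2 Q \<inter> trace_low M V1 V2 a. e = e')"
proof -
  have "simplicial_complex M" "pure_dim M 3"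
    using assms(1) unfolding comb_3_pseudomanifold_def by auto
  then obtain A B where Q: "Q = A \<times> B" and fin: "finite A" "finite B"
    and card: "card A = 2" "card B = 2"
    using assms(3,6) by (rule quadrilateral_eq_times)
  have up: "e \<subseteq> {x} \<times> B" if "e \<in> face_edges M V1 V2 Q \<inter> trace_up M V1 V2 x" for e
    using that trace_up_fst[of e] Q unfolding face_edges_def by fastforce
  have low: "e \<subseteq> A \<times> {a}" if "e \<in> face_edges M V1 V2 Q \<inter> trace_low M V1 V2 a" for e
    using that trace_low_snd[of e] Q unfolding face_edges_def by fastforce
  have "card ({x} \<times> B) \<le> 2" "card (A \<times> {a}) \<le> 2"
    using card by (simp_all add: card_cartesian_product)
  with fin up low show ?thesis
    by (meson IntD1 face_edges_subset_eq finite.emptyI finite.insertI finite_SigmaI)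
qed

end
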